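(* Let $(\Phi,D)$ and $(\Psi,E)$ be domain-free continuous information algebras, let $f,g\in[\Phi\rightarrow\Psi]_c$ and $(x,y)\in D\times E$. Then $f\otimes g\in[\Phi\rightarrow\Psi]_c$. Moreover, if $(\Phi,D)$ and $(\Psi,E)$ are s-continuous, then $f^{\Rightarrow(x,y)}\in[\Phi\rightarrow\Psi]_c$.
   Context: A domain-free information algebra $(\Phi,D)$ consists of a set $\Phi$, a lattice $D$, a combination $\otimes$ and a focusing $(\psi,x)\mapsto\psi^{\Rightarrow x}$ ($x\in D$) such that: $\otimes$ is associative, commutative with neutral element $e$; $(\psi^{\Rightarrow y})^{\Rightarrow x}=\psi^{\Rightarrow x\wedge y}$; $(\phi^{\Rightarrow x}\otimes\psi)^{\Rightarrow x}=\phi^{\Rightarrow x}\otimes\psi^{\Rightarrow x}$; every $\psi$ has some $x$ with $\psi^{\Rightarrow x}=\psi$; $\psi\otimes\psi^{\Rightarrow x}=\psi$. Order: $\psi\le\phi$ iff $\psi\otimes\phi=\phi$; suprema refer to this order. $a\ll b$ means: for every directed $X$ with $b\le\vee X$ there is $c\in X$ with $a\le c$. $(\Phi,D)$, with $D$ having a top element, is continuous (resp. s-continuous) if there exists $\Gamma\subseteq\Phi$, closed under combination and containing $e$, such that every directed subset of $\Gamma$ has a supremum in $\Phi$ and $\phi=\vee\{\psi\in\Gamma:\psi\ll\phi\}$ for all $\phi$ (resp. $\phi^{\Rightarrow x}=\vee\{\psi\in\Gamma:\psi=\psi^{\Rightarrow x}\ll\phi\}$ for all $\phi,x$). For continuous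 $(\Phi,D)$, $(\Psi,E)$, $[\Phi\rightarrow\Psi]_c$ is the set of maps $f:\Phi\to\Psi$ with $f(\vee X)=\vee f(X)$ for every directed $X\subseteq\Phi$. For $f,g\in[\Phi\rightarrow\Psi]_c$ and $(x,y)\in D\times E$ define $(f\otimes g)(\phi)=f(\phi)\otimes g(\phi)$ and $f^{\Rightarrow(x,y)}(\phi)=(f(\phi^{\Rightarrow x}))^{\Rightarrow y}$. *)

theory Defs
  imports Main
begin

text \<open>A domain-free information algebra (Phi, D) is represented by a carrier type 'a
  (the set Phi), a lattice type 'd (the lattice D), a combination comb, a neutral element e
  and a focusing foc psi x (written psi^{=> x} in the paper).\<close>

definition info_alg :: "('a \<Rightarrow> 'a \<Rightarrow> 'a) \<Rightarrow> 'a \<Rightarrow> ('a \<Rightarrow> 'd::lattice \<Rightarrow> 'a) \<Rightarrow> bool" where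
  "info_alg comb e foc \<longleftrightarrow>
     (\<forall>a b c. comb (comb a b) c = comb a (comb b c)) \<and>
     (\<forall>a b. comb a b = comb b a) \<and>
     (\<forall>a. comb e a = a \<and> comb a e = a) \<and>
     (\<forall>\<psi> x y. foc (foc \<psi> y) x = foc \<psi> (inf x y)) \<and>
     (\<forall>\<phi> \<psi> x. foc (comb (foc \<phi> x) \<psi>) x = comb (foc \<phi> x) (foc \<psi> x)) \<and>
     (\<forall>\<psi>. \<exists>x. foc \<psi> x = \<psi>) \<and>
     (\<forall>\<psi> x. comb \<psi> (foc \<psi> x) = \<psi>)"

definition ia_le :: "('a \<Rightarrow> 'a \<Rightarrow> 'a) \<Rightarrow> 'a \<Rightarrow> 'a \<Rightarrow> bool" where
  "ia_le comb \<psi> \<phi> \<longleftrightarrow> comb \<psi> \<phi> = \<phi>"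

definition ia_is_sup :: "('a \<Rightarrow> 'a \<Rightarrow> 'a) \<Rightarrow> 'a set \<Rightarrow> 'a \<Rightarrow> bool" where
  "ia_is_sup comb X s \<longleftrightarrow> (\<forall>a\<in>X. ia_le comb a s) \<and>
     (\<forall>u. (\<forall>a\<in>X. ia_le comb a u) \<longrightarrow> ia_le comb s u)"

definition ia_has_sup :: "('a \<Rightarrow> 'a \<Rightarrow> 'a) \<Rightarrow> 'a set \<Rightarrow> bool" where
  "ia_has_sup comb X \<longleftrightarrow> (\<exists>s. ia_is_sup comb X s)"

definition ia_Sup :: "('a \<Rightarrow> 'a \<Rightarrow> 'a) \<Rightarrow> 'a set \<Rightarrow> 'a" where
  "ia_Sup comb X = (THE s. ia_is_sup comb X s)"

definition ia_directed :: "('a \<Rightarrow> 'a \<Rightarrow> 'a) \<Rightarrow> 'a set \<Rightarrow> bool" where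
  "ia_directed comb X \<longleftrightarrow> X \<noteq> {} \<and>
     (\<forall>a\<in>X. \<forall>b\<in>X. \<exists>c\<in>X. ia_le comb a c \<and> ia_le comb b c)"

definition ia_way_below :: "('a \<Rightarrow> 'a \<Rightarrow> 'a) \<Rightarrow> 'a \<Rightarrow> 'a \<Rightarrow> bool" where
  "ia_way_below comb a b \<longleftrightarrow>
     (\<forall>X. ia_directed comb X \<and> ia_has_sup comb X \<and> ia_le comb b (ia_Sup comb X)
          \<longrightarrow> (\<exists>c\<in>X. ia_le comb a c))"

definition ia_continuous :: "('a \<Rightarrow> 'a \<Rightarrow> 'a) \<Rightarrow> 'a \<Rightarrow> ('a \<Rightarrow> 'd::lattice \<Rightarrow> 'a) \<Rightarrow> bool" where
  "ia_continuous comb e foc \<longleftrightarrow>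
     (\<exists>t::'d. \<forall>x. x \<le> t) \<and>
     (\<exists>\<Gamma>. (\<forall>a\<in>\<Gamma>. \<forall>b\<in>\<Gamma>. comb a b \<in> \<Gamma>) \<and> e \<in> \<Gamma> \<and>
          (\<forall>X. X \<subseteq> \<Gamma> \<and> ia_directed comb X \<longrightarrow> ia_has_sup comb X) \<and>
          (\<forall>\<phi>. ia_is_sup comb {\<psi>\<in>\<Gamma>. ia_way_below comb \<psi> \<phi>} \<phi>))"

definition ia_s_continuous :: "('a \<Rightarrow> 'a \<Rightarrow> 'a) \<Rightarrow> 'a \<Rightarrow> ('a \<Rightarrow> 'd::lattice \<Rightarrow> 'a) \<Rightarrow> bool" where
  "ia_s_continuous comb e foc \<longleftrightarrow>
     (\<exists>t::'d. \<forall>x. x \<le> t) \<and>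
     (\<exists>\<Gamma>. (\<forall>a\<in>\<Gamma>. \<forall>b\<in>\<Gamma>. comb a b \<in> \<Gamma>) \<and> e \<in> \<Gamma> \<and>
          (\<forall>X. X \<subseteq> \<Gamma> \<and> ia_directed comb X \<longrightarrow> ia_has_sup comb X) \<and>
          (\<forall>\<phi> x. ia_is_sup comb {\<psi>\<in>\<Gamma>. foc \<psi> x = \<psi> \<and> ia_way_below comb \<psi> \<phi>} (foc \<phi> x)))"

text \<open>Membership in [Phi -> Psi]_c: f preserves suprema of directed sets
  (whenever the directed set X has a supremum in Phi, f(X) has supremum f(sup X) in Psi).\<close>
definition ia_cont_map :: "('a \<Rightarrow> 'a \<Rightarrow> 'a) \<Rightarrow> ('b \<Rightarrow> 'b \<Rightarrow> 'b) \<Rightarrow> ('a \<Rightarrow> 'b) \<Rightarrow> bool" where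
  "ia_cont_map combA combB f \<longleftrightarrow>
     (\<forall>X. ia_directed combA X \<and> ia_has_sup combA X \<longrightarrow>
          ia_is_sup combB (f ` X) (f (ia_Sup combA X)))"

end

theory Submission
  imports Defs
begin

text \<open>In the information order, combination is the binary join, so it preserves suprema of
  arbitrary families. Under s-continuity, focusing on x preserves directed suprema: the focus of
  sup X is the join of the x-supported elements way below sup X, and each of them lies below some
  c in X, hence below the focus of c. Continuous maps are monotone, so they compose, and
  f^(x,y) is the composite of focusing on x, f and focusing on y.\<close>

lemma ia_comb_idem: "info_alg comb e foc \<Longrightarrow> comb a a = a"
  unfolding info_alg_def by metis

lemma ia_le_refl: "info_alg comb e foc \<Longrightarrow> ia_le comb a a"
  by (simp add: ia_le_def ia_comb_idem)

lemma ia_le_trans: "info_alg comb e foc \<Longrightarrow> ia_le comb a b \<Longrightarrow> ia_le comb b c \<Longrightarrow> ia_le comb a c"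
  unfolding ia_le_def info_alg_def by metis

lemma ia_le_antisym: "info_alg comb e foc \<Longrightarrow> ia_le comb a b \<Longrightarrow> ia_le comb b a \<Longrightarrow> a = b"
  unfolding ia_le_def info_alg_def by metis

lemma ia_le_comb_left: "info_alg comb e foc \<Longrightarrow> ia_le comb a (comb a b)"
  unfolding ia_le_def info_alg_def by metis

lemma ia_le_comb_right: "info_alg comb e foc \<Longrightarrow> ia_le comb b (comb a b)"
  unfolding ia_le_def info_alg_def by metis

lemma ia_comb_mono:
  assumes A: "info_alg comb e foc" and "ia_le comb a b" and "ia_le comb c d"
  shows "ia_le comb (comb a c) (comb b d)"
proof -
  have "comb (comb a c) (comb b d) = comb (comb a b) (comb c d)"
    using A unfolding info_alg_def by metis
  then show ?thesis using assms(2,3) unfolding ia_le_def by simp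
qed

lemma ia_comb_least: "info_alg comb e foc \<Longrightarrow> ia_le comb a u \<Longrightarrow> ia_le comb b u \<Longrightarrow> ia_le comb (comb a b) u"
  using ia_comb_mono[of comb e foc a u b u] ia_comb_idem[of comb e foc u] by simp

lemma ia_foc_mono:
  assumes A: "info_alg comb e foc" and ab: "ia_le comb a b"
  shows "ia_le comb (foc a x) (foc b x)"
proof -
  have "comb (foc a x) (comb a b) = comb a b"
    using A unfolding info_alg_def by metis
  then have "foc (comb a b) x = comb (foc a x) (foc (comb a b) x)"
    using A unfolding info_alg_def by metis
  then show ?thesis using ab unfolding ia_le_def by simp
qed

lemma ia_Sup_eq: "info_alg comb e foc \<Longrightarrow> ia_is_sup comb X s \<Longrightarrow> ia_Sup comb X = s"
  unfolding ia_Sup_def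
  by (rule the_equality) (auto simp: ia_is_sup_def intro: ia_le_antisym)

lemma ia_is_sup_Sup: "info_alg comb e foc \<Longrightarrow> ia_has_sup comb X \<Longrightarrow> ia_is_sup comb X (ia_Sup comb X)"
  unfolding ia_has_sup_def using ia_Sup_eq by metis

lemma ia_directed_image:
  assumes "ia_directed cA X" and "\<And>a b. ia_le cA a b \<Longrightarrow> ia_le cB (h a) (h b)"
  shows "ia_directed cB (h ` X)"
  using assms unfolding ia_directed_def by (auto, metis)

lemma ia_is_sup_comb_image:
  assumes B: "info_alg comb e foc"
    and sf: "ia_is_sup comb (f ` X) s" and sg: "ia_is_sup comb (g ` X) t"
  shows "ia_is_sup comb ((\<lambda>a. comb (f a) (g a)) ` X) (comb s t)"
  unfolding ia_is_sup_def
proof (intro conjI ballI allI impI)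
  fix b assume "b \<in> (\<lambda>a. comb (f a) (g a)) ` X"
  then obtain a where "a \<in> X" and b: "b = comb (f a) (g a)" by blast
  then have "ia_le comb (f a) s" and "ia_le comb (g a) t"
    using sf sg unfolding ia_is_sup_def by simp_all
  then show "ia_le comb b (comb s t)"
    unfolding b by (rule ia_comb_mono[OF B])
next
  fix u assume u: "\<forall>b\<in>(\<lambda>a. comb (f a) (g a)) ` X. ia_le comb b u"
  have "ia_le comb (f a) u" and "ia_le comb (g a) u" if "a \<in> X" for a
    using u that ia_le_trans[OF B ia_le_comb_left[OF B]] ia_le_trans[OF B ia_le_comb_right[OF B]]
    by blast+
  then have "ia_le comb s u" and "ia_le comb t u"
    using sf sg unfolding ia_is_sup_def by blast+
  then show "ia_le comb (comb s t) u" by (rule ia_comb_least[OF B])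
qed

lemma ia_cont_map_comb:
  assumes "info_alg cB eB fB" and "ia_cont_map cA cB f" and "ia_cont_map cA cB g"
  shows "ia_cont_map cA cB (\<lambda>a. cB (f a) (g a))"
  using assms(2,3) ia_is_sup_comb_image[OF assms(1)] unfolding ia_cont_map_def by blast

lemma ia_cont_map_mono:
  assumes A: "info_alg cA eA fA" and f: "ia_cont_map cA cB f" and ab: "ia_le cA a b"
  shows "ia_le cB (f a) (f b)"
proof -
  have sup: "ia_is_sup cA {a, b} b"
    using ab ia_le_refl[OF A] unfolding ia_is_sup_def by auto
  moreover have "ia_directed cA {a, b}"
    using ab ia_le_refl[OF A] unfolding ia_directed_def by auto
  ultimately have "ia_is_sup cB (f ` {a, b}) (f b)"
    using f ia_Sup_eq[OF A sup] unfolding ia_cont_map_def ia_has_sup_def by metis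
  then show ?thesis unfolding ia_is_sup_def by auto
qed

lemma ia_cont_map_comp:
  assumes A: "info_alg cA eA fA" and B: "info_alg cB eB fB"
    and f: "ia_cont_map cA cB f" and h: "ia_cont_map cB cC h"
  shows "ia_cont_map cA cC (h \<circ> f)"
  unfolding ia_cont_map_def
proof (intro allI impI)
  fix X assume X: "ia_directed cA X \<and> ia_has_sup cA X"
  then have sup: "ia_is_sup cB (f ` X) (f (ia_Sup cA X))"
    using f unfolding ia_cont_map_def by blast
  have "ia_directed cB (f ` X)"
    using X ia_directed_image ia_cont_map_mono[OF A f] by blast
  then have "ia_is_sup cC (h ` f ` X) (h (ia_Sup cB (f ` X)))"
    using h sup unfolding ia_cont_map_def ia_has_sup_def by blast
  then show "ia_is_sup cC ((h \<circ> f) ` X) ((h \<circ> f) (ia_Sup cA X))"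
    by (simp add: ia_Sup_eq[OF B sup] image_comp)
qed

lemma ia_cont_map_foc:
  assumes A: "info_alg comb e foc" and S: "ia_s_continuous comb e foc"
  shows "ia_cont_map comb comb (\<lambda>a. foc a x)"
  unfolding ia_cont_map_def
proof (intro allI impI)
  fix X assume X: "ia_directed comb X \<and> ia_has_sup comb X"
  define t where "t = ia_Sup comb X"
  have t: "ia_is_sup comb X t"
    using ia_is_sup_Sup[OF A] X unfolding t_def by blast
  obtain \<Gamma> where "\<forall>\<phi> x. ia_is_sup comb {\<psi>\<in>\<Gamma>. foc \<psi> x = \<psi> \<and> ia_way_below comb \<psi> \<phi>} (foc \<phi> x)"
    using S unfolding ia_s_continuous_def by (elim conjE exE)
  then have \<Gamma>: "ia_is_sup comb {\<psi>\<in>\<Gamma>. foc \<psi> x = \<psi> \<and> ia_way_below comb \<psi> t} (foc t x)"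
    by blast
  have least: "ia_le comb (foc t x) u" if u: "\<forall>b\<in>(\<lambda>a. foc a x) ` X. ia_le comb b u" for u
  proof -
    have "ia_le comb \<psi> u" if "\<psi> \<in> \<Gamma>" "foc \<psi> x = \<psi>" "ia_way_below comb \<psi> t" for \<psi>
    proof -
      obtain c where c: "c \<in> X" "ia_le comb \<psi> c"
        using \<open>ia_way_below comb \<psi> t\<close> X ia_le_refl[OF A, of t]
        unfolding ia_way_below_def t_def by blast
      then have "ia_le comb \<psi> (foc c x)"
        using ia_foc_mono[OF A c(2), of x] \<open>foc \<psi> x = \<psi>\<close> by simp
      then show ?thesis using u c(1) ia_le_trans[OF A] by blast
    qed
    then show ?thesis using \<Gamma> unfolding ia_is_sup_def by blast
  qed
  moreover have "\<forall>b\<in>(\<lambda>a. foc a x) ` X. ia_le comb b (foc t x)"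
    using t ia_foc_mono[OF A] unfolding ia_is_sup_def by auto
  ultimately show "ia_is_sup comb ((\<lambda>a. foc a x) ` X) (foc (ia_Sup comb X) x)"
    unfolding ia_is_sup_def t_def[symmetric] by blast
qed

theorem proposition3p12:
  fixes combP :: "'a \<Rightarrow> 'a \<Rightarrow> 'a" and eP :: 'a and focP :: "'a \<Rightarrow> 'd::lattice \<Rightarrow> 'a"
    and combQ :: "'b \<Rightarrow> 'b \<Rightarrow> 'b" and eQ :: 'b and focQ :: "'b \<Rightarrow> 'e::lattice \<Rightarrow> 'b"
    and f g :: "'a \<Rightarrow> 'b" and x :: 'd and y :: 'e
  assumes "info_alg combP eP focP" and "info_alg combQ eQ focQ"
    and "ia_continuous combP eP focP" and "ia_continuous combQ eQ focQ"
    and "ia_cont_map combP combQ f" and "ia_cont_map combP combQ g"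
  shows "ia_cont_map combP combQ (\<lambda>\<phi>. combQ (f \<phi>) (g \<phi>)) \<and>
         (ia_s_continuous combP eP focP \<and> ia_s_continuous combQ eQ focQ \<longrightarrow>
            ia_cont_map combP combQ (\<lambda>\<phi>. focQ (f (focP \<phi> x)) y))"
proof (intro conjI impI)
  show "ia_cont_map combP combQ (\<lambda>\<phi>. combQ (f \<phi>) (g \<phi>))"
    using ia_cont_map_comb assms(2,5,6) .
next
  assume "ia_s_continuous combP eP focP \<and> ia_s_continuous combQ eQ focQ"
  then have foc_x: "ia_cont_map combP combP (\<lambda>\<phi>. focP \<phi> x)"
    and foc_y: "ia_cont_map combQ combQ (\<lambda>\<psi>. focQ \<psi> y)"
    using ia_cont_map_foc[OF assms(1)] ia_cont_map_foc[OF assms(2)] by blast+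
  have "ia_cont_map combP combQ (f \<circ> (\<lambda>\<phi>. focP \<phi> x))"
    using ia_cont_map_comp[OF assms(1,1) foc_x assms(5)] .
  then have "ia_cont_map combP combQ ((\<lambda>\<psi>. focQ \<psi> y) \<circ> (f \<circ> (\<lambda>\<phi>. focP \<phi> x)))"
    using ia_cont_map_comp[OF assms(1,2) _ foc_y] by blast
  then show "ia_cont_map combP combQ (\<lambda>\<phi>. focQ (f (focP \<phi> x)) y)"
    by (simp add: comp_def)
qed

end
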